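(* Let $k\ge1$, $G=(V,E)$ an inductively $k$-independent graph with $k$-independence ordering $v_1,\dots,v_n$, $f:2^V\to\mathbb{R}_{\ge0}$ monotone submodular with $f(\emptyset)=0$, and $\beta>0$. Run algorithm PD-MON (described in the context) and let $\mu=f(S_{\mathrm{end}})$, $y_i=(1+\beta)w_i$ for all $i$, and $z_i=0$ if $v_i\in S_{\mathrm{end}}$ and $z_i=f_{S_i}(v_i)$ otherwise, where $S_i$ is the stack just before $v_i$ is processed. Then $(\mu,y,z)$ is a feasible solution of the linear program with constraints \[ \mu+\sum_{v_i\in L} z_i\ge f(L)\ \ \text{for all } L\subseteq V,\qquad y_i+\sum_{v_j\in B_i}y_j\ge z_i\ \text{ and } y_i\ge0\ \ \text{for all } i\in[n], \] where $B_i=N(v_i)\cap\{v_1,\dots,v_{i-1}\}$ ($\mu$ and $z$ are unrestricted in sign).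
   Context: $N(v)$ is the neighbourhood of $v$ (excluding $v$); $G$ is inductively $k$-independent with $k$-independence ordering $v_1,\dots,v_n$ if for every $i$, $G[N(v_i)\cap\{v_i,\dots,v_n\}]$ has no independent set of size more than $k$. For $S\subseteq V$, $f_S(v)=f(S\cup\{v\})-f(S)$. Algorithm PD-MON (parameter $\beta>0$). Phase 1: start with $S=\emptyset$ (a stack) and $w_1=\dots=w_n=0$. For $i=1,\dots,n$: let $C_i=N(v_i)\cap S$ for the current $S$; if $f_S(v_i)>(1+\beta)\sum_{v_j\in C_i}w_j$, set $w_i=f_S(v_i)-\sum_{v_j\in C_i}w_j$ (with $S$ the set before insertion) and push $v_i$ onto $S$; otherwise leave $w_i=0$. Let $S_{\mathrm{end}}$ be $S$ at the end of Phase 1. Phase 2: with $S_{\mathrm{out}}=\emptyset$, pop vertices of $S_{\mathrm{end}}$ in reverse insertion order, adding a popped $v$ to $S_{\mathrm{out}}$ whenever $S_{\mathrm{out}}\cup\{v\}$ is independent. Output $S_{\mathrm{out}}$. *)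

theory Defs
  imports Complex_Main
begin

text \<open>Graphs: vertex type 'a, adjacency relation E, vertex set V = set vs where the
  list vs is the k-independence ordering v_1, ..., v_n (0-indexed: v_i = vs ! i).\<close>

definition simple_graph_on :: "'a set \<Rightarrow> ('a \<Rightarrow> 'a \<Rightarrow> bool) \<Rightarrow> bool" where
  "simple_graph_on V E \<longleftrightarrow> finite V \<and> (\<forall>x y. E x y \<longrightarrow> E y x) \<and> (\<forall>x. \<not> E x x)
     \<and> (\<forall>x y. E x y \<longrightarrow> x \<in> V \<and> y \<in> V)"

definition nbhd :: "('a \<Rightarrow> 'a \<Rightarrow> bool) \<Rightarrow> 'a \<Rightarrow> 'a set" where
  "nbhd E v = {u. E v u}"

definition independent :: "('a \<Rightarrow> 'a \<Rightarrow> bool) \<Rightarrow> 'a set \<Rightarrow> bool" where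
  "independent E I \<longleftrightarrow> (\<forall>x\<in>I. \<forall>y\<in>I. \<not> E x y)"

definition k_independence_ordering :: "('a \<Rightarrow> 'a \<Rightarrow> bool) \<Rightarrow> nat \<Rightarrow> 'a list \<Rightarrow> bool" where
  "k_independence_ordering E k vs \<longleftrightarrow> distinct vs \<and>
     (\<forall>i < length vs. \<forall>I. I \<subseteq> nbhd E (vs ! i) \<inter> set (drop i vs) \<and> independent E I
        \<longrightarrow> card I \<le> k)"

definition monotone_set_fun :: "'a set \<Rightarrow> ('a set \<Rightarrow> real) \<Rightarrow> bool" where
  "monotone_set_fun V f \<longleftrightarrow> (\<forall>A B. A \<subseteq> B \<and> B \<subseteq> V \<longrightarrow> f A \<le> f B)"

definition submodular :: "'a set \<Rightarrow> ('a set \<Rightarrow> real) \<Rightarrow> bool" where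
  "submodular V f \<longleftrightarrow> (\<forall>A B. A \<subseteq> V \<and> B \<subseteq> V \<longrightarrow> f (A \<union> B) + f (A \<inter> B) \<le> f A + f B)"

definition marg :: "('a set \<Rightarrow> real) \<Rightarrow> 'a set \<Rightarrow> 'a \<Rightarrow> real" where
  "marg f S v = f (insert v S) - f S"

text \<open>Phase 1 of PD-MON. State: (stack as list, top first; weights w indexed by vertex,
  which is unambiguous since the ordering is distinct).\<close>
definition pd_step :: "('a set \<Rightarrow> real) \<Rightarrow> ('a \<Rightarrow> 'a \<Rightarrow> bool) \<Rightarrow> real
     \<Rightarrow> 'a list \<times> ('a \<Rightarrow> real) \<Rightarrow> 'a \<Rightarrow> 'a list \<times> ('a \<Rightarrow> real)" where
  "pd_step f E \<beta> st v =
     (let S = set (fst st); w = snd st; C = nbhd E v \<inter> S in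
      if marg f S v > (1 + \<beta>) * (\<Sum>u\<in>C. w u)
      then (v # fst st, w(v := marg f S v - (\<Sum>u\<in>C. w u)))
      else st)"

definition pd_phase1_prefix :: "('a set \<Rightarrow> real) \<Rightarrow> ('a \<Rightarrow> 'a \<Rightarrow> bool) \<Rightarrow> real \<Rightarrow> 'a list
     \<Rightarrow> nat \<Rightarrow> 'a list \<times> ('a \<Rightarrow> real)" where
  "pd_phase1_prefix f E \<beta> vs i = foldl (pd_step f E \<beta>) ([], (\<lambda>_. 0)) (take i vs)"

definition stack_before :: "('a set \<Rightarrow> real) \<Rightarrow> ('a \<Rightarrow> 'a \<Rightarrow> bool) \<Rightarrow> real \<Rightarrow> 'a list
     \<Rightarrow> nat \<Rightarrow> 'a set" where
  "stack_before f E \<beta> vs i = set (fst (pd_phase1_prefix f E \<beta> vs i))"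

definition S_end :: "('a set \<Rightarrow> real) \<Rightarrow> ('a \<Rightarrow> 'a \<Rightarrow> bool) \<Rightarrow> real \<Rightarrow> 'a list \<Rightarrow> 'a set" where
  "S_end f E \<beta> vs = set (fst (pd_phase1_prefix f E \<beta> vs (length vs)))"

definition pd_weights :: "('a set \<Rightarrow> real) \<Rightarrow> ('a \<Rightarrow> 'a \<Rightarrow> bool) \<Rightarrow> real \<Rightarrow> 'a list \<Rightarrow> 'a \<Rightarrow> real" where
  "pd_weights f E \<beta> vs = snd (pd_phase1_prefix f E \<beta> vs (length vs))"

text \<open>Phase 2 (not needed for the lemma, included for completeness): pop in reverse
  insertion order (i.e. top of stack first), greedily keeping independence.\<close>
definition pd_output :: "('a set \<Rightarrow> real) \<Rightarrow> ('a \<Rightarrow> 'a \<Rightarrow> bool) \<Rightarrow> real \<Rightarrow> 'a list \<Rightarrow> 'a set" where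
  "pd_output f E \<beta> vs =
     foldl (\<lambda>Sout v. if independent E (insert v Sout) then insert v Sout else Sout) {}
       (fst (pd_phase1_prefix f E \<beta> vs (length vs)))"

end

theory Submission
  imports Defs
begin

text \<open>Monotonicity and submodularity give
  f(L) \<le> f(S_end) + \<Sum>_{v \<in> L - S_end} f_{S_end}(v), and since the stack only grows,
  S_i \<subseteq> S_end and diminishing returns bound each summand by z_i. A rejected v_i satisfies
  f_{S_i}(v_i) \<le> (1+\<beta>) \<Sum>_{C_i} w_j, where C_i consists of earlier neighbours whose weights are
  final once assigned, because every vertex is processed only once. An accepted vertex receives
  w_i = f_S(v_i) - \<Sum>_{C_i} w_j > \<beta> \<Sum>_{C_i} w_j \<ge> 0, so all weights are nonnegative.\<close>

lemma marg_nonneg: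
  assumes "monotone_set_fun V f" "S \<subseteq> V" "v \<in> V"
  shows "marg f S v \<ge> 0"
proof -
  have "f S \<le> f (insert v S)" using assms unfolding monotone_set_fun_def by blast
  then show ?thesis unfolding marg_def by simp
qed

lemma marg_antimono:
  assumes "monotone_set_fun V f" "submodular V f" "S \<subseteq> T" "T \<subseteq> V" "v \<in> V"
  shows "marg f T v \<le> marg f S v"
proof (cases "v \<in> T")
  case True
  then have "marg f T v = 0" by (simp add: marg_def insert_absorb)
  with marg_nonneg[OF assms(1), of S v] assms show ?thesis by auto
next
  case False
  have "insert v S \<union> T = insert v T" "insert v S \<inter> T = S" using assms False by auto
  moreover have "insert v S \<subseteq> V" using assms by auto
  ultimately have "f (insert v T) + f S \<le> f (insert v S) + f T"
    using assms(2,4) unfolding submodular_def by metis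
  then show ?thesis unfolding marg_def by simp
qed

lemma submodular_union_le_sum_marg:
  assumes "submodular V f" "finite B" "B \<subseteq> V" "T \<subseteq> V"
  shows "f (T \<union> B) \<le> f T + (\<Sum>b\<in>B. marg f T b)"
  using assms(2,3)
proof (induction B rule: finite_induct)
  case empty
  then show ?case by simp
next
  case (insert b B)
  have "f (T \<union> insert b B) \<le> f (T \<union> B) + marg f T b"
  proof (cases "b \<in> T")
    case True
    then show ?thesis by (simp add: marg_def insert_absorb)
  next
    case False
    have "insert b T \<inter> (T \<union> B) = T" using insert False by auto
    moreover have "insert b T \<union> (T \<union> B) = T \<union> insert b B" by auto
    moreover have "insert b T \<subseteq> V" "T \<union> B \<subseteq> V" using insert assms(4) by auto
    ultimately have "f (T \<union> insert b B) + f T \<le> f (insert b T) + f (T \<union> B)"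
      using assms(1) unfolding submodular_def by metis
    then show ?thesis unfolding marg_def by simp
  qed
  then show ?case using insert by simp
qed

lemma monotone_submodular_le_sum_marg:
  assumes "monotone_set_fun V f" "submodular V f" "finite A" "A \<subseteq> V" "S \<subseteq> V"
  shows "f A \<le> f S + (\<Sum>a\<in>A - S. marg f S a)"
proof -
  have "f A \<le> f (S \<union> (A - S))"
    using assms(1,4,5) unfolding monotone_set_fun_def by (metis Un_Diff_cancel Un_upper2 le_sup_iff)
  also have "\<dots> \<le> f S + (\<Sum>a\<in>A - S. marg f S a)"
    using assms by (intro submodular_union_le_sum_marg) auto
  finally show ?thesis .
qed

lemma pd_step_stack:
  "set (fst st) \<subseteq> set (fst (pd_step f E \<beta> st v))"
  "set (fst (pd_step f E \<beta> st v)) \<subseteq> insert v (set (fst st))"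
  by (auto simp: pd_step_def Let_def)

lemma pd_step_weight_other: "u \<noteq> v \<Longrightarrow> snd (pd_step f E \<beta> st v) u = snd st u"
  by (simp add: pd_step_def Let_def)

lemma pd_step_weight_nonneg:
  assumes "\<beta> \<ge> 0" "\<And>u. snd st u \<ge> 0"
  shows "snd (pd_step f E \<beta> st v) u \<ge> 0"
proof -
  let ?s = "\<Sum>u\<in>nbhd E v \<inter> set (fst st). snd st u"
  have "\<beta> * ?s \<ge> 0" using assms by (simp add: sum_nonneg)
  then show ?thesis using assms(2) by (auto simp: pd_step_def Let_def algebra_simps)
qed

lemma pd_steps_stack_mono: "set (fst st) \<subseteq> set (fst (foldl (pd_step f E \<beta>) st xs))"
proof (induction xs arbitrary: st)
  case Nil
  then show ?case by simp
next
  case (Cons x xs)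
  then show ?case using pd_step_stack(1)[of st f E \<beta> x] by fastforce
qed

lemma pd_steps_stack_subset: "set (fst (foldl (pd_step f E \<beta>) st xs)) \<subseteq> set (fst st) \<union> set xs"
proof (induction xs arbitrary: st)
  case Nil
  then show ?case by simp
next
  case (Cons x xs)
  then show ?case using pd_step_stack(2)[of f E \<beta> st x] by fastforce
qed

lemma pd_steps_weight_other:
  "u \<notin> set xs \<Longrightarrow> snd (foldl (pd_step f E \<beta>) st xs) u = snd st u"
  by (induction xs arbitrary: st) (auto simp: pd_step_weight_other)

lemma pd_steps_weight_nonneg:
  assumes "\<beta> \<ge> 0"
  shows "(\<And>u. snd st u \<ge> 0) \<Longrightarrow> snd (foldl (pd_step f E \<beta>) st xs) u \<ge> 0"
proof (induction xs arbitrary: st)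
  case Nil
  then show ?case by simp
next
  case (Cons x xs)
  then show ?case using pd_step_weight_nonneg[OF assms Cons.prems] by simp
qed

lemma pd_phase1_prefix_Suc:
  "i < length vs \<Longrightarrow>
     pd_phase1_prefix f E \<beta> vs (Suc i) = pd_step f E \<beta> (pd_phase1_prefix f E \<beta> vs i) (vs ! i)"
  by (simp add: pd_phase1_prefix_def take_Suc_conv_app_nth)

lemma pd_phase1_prefix_continue:
  "foldl (pd_step f E \<beta>) (pd_phase1_prefix f E \<beta> vs i) (drop i vs)
     = pd_phase1_prefix f E \<beta> vs (length vs)"
  unfolding pd_phase1_prefix_def by (simp flip: foldl_append)

lemma stack_before_subset_take: "stack_before f E \<beta> vs i \<subseteq> set (take i vs)"
  using pd_steps_stack_subset[of f E \<beta> "([], \<lambda>_. 0)" "take i vs"]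
  by (simp add: stack_before_def pd_phase1_prefix_def)

lemma stack_before_subset_S_end: "stack_before f E \<beta> vs i \<subseteq> S_end f E \<beta> vs"
  unfolding stack_before_def S_end_def
  by (metis pd_phase1_prefix_continue pd_steps_stack_mono)

lemma S_end_subset: "S_end f E \<beta> vs \<subseteq> set vs"
  using stack_before_subset_take[of f E \<beta> vs "length vs"]
  by (simp add: stack_before_def S_end_def)

lemma pd_weights_nonneg: "\<beta> \<ge> 0 \<Longrightarrow> pd_weights f E \<beta> vs u \<ge> 0"
  unfolding pd_weights_def pd_phase1_prefix_def by (rule pd_steps_weight_nonneg) auto

lemma pd_weights_stack_before:
  assumes "distinct vs" "u \<in> stack_before f E \<beta> vs i"
  shows "pd_weights f E \<beta> vs u = snd (pd_phase1_prefix f E \<beta> vs i) u"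
proof -
  have "u \<notin> set (drop i vs)"
    using assms stack_before_subset_take set_take_disj_set_drop_if_distinct by fastforce
  then show ?thesis unfolding pd_weights_def
    by (metis pd_phase1_prefix_continue pd_steps_weight_other)
qed

lemma pd_rejected_marg_le:
  assumes "distinct vs" "i < length vs" "vs ! i \<notin> S_end f E \<beta> vs"
  shows "marg f (stack_before f E \<beta> vs i) (vs ! i)
           \<le> (1 + \<beta>) * (\<Sum>u\<in>nbhd E (vs ! i) \<inter> stack_before f E \<beta> vs i. pd_weights f E \<beta> vs u)"
proof -
  let ?st = "pd_phase1_prefix f E \<beta> vs i"
  have "set (fst (pd_step f E \<beta> ?st (vs ! i))) \<subseteq> S_end f E \<beta> vs"
    using stack_before_subset_S_end[of f E \<beta> vs "Suc i"] assms(2)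
    by (simp add: stack_before_def pd_phase1_prefix_Suc)
  with assms(3) have "\<not> marg f (set (fst ?st)) (vs ! i)
      > (1 + \<beta>) * (\<Sum>u\<in>nbhd E (vs ! i) \<inter> set (fst ?st). snd ?st u)"
    by (auto simp: pd_step_def Let_def)
  moreover have "(\<Sum>u\<in>nbhd E (vs ! i) \<inter> set (fst ?st). snd ?st u)
      = (\<Sum>u\<in>nbhd E (vs ! i) \<inter> stack_before f E \<beta> vs i. pd_weights f E \<beta> vs u)"
    using pd_weights_stack_before[OF assms(1)] by (auto simp: stack_before_def intro: sum.cong)
  ultimately show ?thesis by (simp add: stack_before_def)
qed

definition pd_dual_z :: "('a set \<Rightarrow> real) \<Rightarrow> ('a \<Rightarrow> 'a \<Rightarrow> bool) \<Rightarrow> real \<Rightarrow> 'a list \<Rightarrow> nat \<Rightarrow> real"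
  where "pd_dual_z f E \<beta> vs i =
    (if vs ! i \<in> S_end f E \<beta> vs then 0 else marg f (stack_before f E \<beta> vs i) (vs ! i))"

lemma pd_dual_z_nonneg:
  assumes "monotone_set_fun (set vs) f" "i < length vs"
  shows "pd_dual_z f E \<beta> vs i \<ge> 0"
  using marg_nonneg[OF assms(1)] stack_before_subset_take[of f E \<beta> vs i] assms(2)
  by (auto simp: pd_dual_z_def dest: subset_trans[OF _ set_take_subset])

lemma pd_cover_constraint:
  assumes mono: "monotone_set_fun (set vs) f" and submod: "submodular (set vs) f"
    and L: "L \<subseteq> {..<length vs}"
  shows "f ((\<lambda>i. vs ! i) ` L) \<le> f (S_end f E \<beta> vs) + (\<Sum>i\<in>L. pd_dual_z f E \<beta> vs i)"
proof -
  let ?S = "S_end f E \<beta> vs" and ?z = "pd_dual_z f E \<beta> vs"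
  let ?L' = "{i\<in>L. vs ! i \<notin> ?S}"
  have finL: "finite L" using L finite_subset by blast
  have in_vs: "vs ! i \<in> set vs" if "i \<in> L" for i using that L by auto
  have S_sub: "?S \<subseteq> set vs" by (rule S_end_subset)
  have "f ((\<lambda>i. vs ! i) ` L) \<le> f ?S + (\<Sum>a\<in>(\<lambda>i. vs ! i) ` L - ?S. marg f ?S a)"
    using in_vs finL S_sub by (intro monotone_submodular_le_sum_marg[OF mono submod]) auto
  also have "(\<lambda>i. vs ! i) ` L - ?S = (\<lambda>i. vs ! i) ` ?L'" by auto
  also have "(\<Sum>a\<in>(\<lambda>i. vs ! i) ` ?L'. marg f ?S a) \<le> (\<Sum>i\<in>?L'. marg f ?S (vs ! i))"
    using finL in_vs S_sub
    by (auto intro!: order.trans[OF sum_image_le] marg_nonneg[OF mono] simp: comp_def)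
  also have "\<dots> \<le> (\<Sum>i\<in>?L'. ?z i)"
    using in_vs marg_antimono[OF mono submod stack_before_subset_S_end S_sub]
    by (intro sum_mono) (simp add: pd_dual_z_def)
  also have "\<dots> \<le> (\<Sum>i\<in>L. ?z i)"
    using finL L pd_dual_z_nonneg[OF mono] by (intro sum_mono2) auto
  finally show ?thesis by simp
qed

lemma pd_edge_constraint:
  assumes "distinct vs" "\<beta> \<ge> 0" "i < length vs"
  shows "pd_dual_z f E \<beta> vs i \<le> (1 + \<beta>) * pd_weights f E \<beta> vs (vs ! i)
           + (\<Sum>j\<in>{j. j < i \<and> E (vs ! i) (vs ! j)}. (1 + \<beta>) * pd_weights f E \<beta> vs (vs ! j))"
proof -
  let ?w = "pd_weights f E \<beta> vs" and ?S = "stack_before f E \<beta> vs i"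
  let ?J = "{j. j < i \<and> E (vs ! i) (vs ! j)}"
  have w_nonneg: "?w u \<ge> 0" for u using pd_weights_nonneg[OF assms(2)] .
  have "pd_dual_z f E \<beta> vs i \<le> (1 + \<beta>) * (\<Sum>j\<in>?J. ?w (vs ! j))"
  proof (cases "vs ! i \<in> S_end f E \<beta> vs")
    case True
    then show ?thesis using assms(2) w_nonneg by (simp add: pd_dual_z_def sum_nonneg)
  next
    case False
    have "nbhd E (vs ! i) \<inter> ?S \<subseteq> (\<lambda>j. vs ! j) ` ?J"
      using stack_before_subset_take[of f E \<beta> vs i] assms(3)
      by (fastforce simp: nbhd_def in_set_conv_nth)
    then have "(\<Sum>u\<in>nbhd E (vs ! i) \<inter> ?S. ?w u) \<le> (\<Sum>u\<in>(\<lambda>j. vs ! j) ` ?J. ?w u)"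
      using w_nonneg by (intro sum_mono2) auto
    also have "\<dots> \<le> (\<Sum>j\<in>?J. ?w (vs ! j))"
      using w_nonneg sum_image_le[of ?J ?w "\<lambda>j. vs ! j"] by (simp add: comp_def)
    finally have "(1 + \<beta>) * (\<Sum>u\<in>nbhd E (vs ! i) \<inter> ?S. ?w u) \<le> (1 + \<beta>) * (\<Sum>j\<in>?J. ?w (vs ! j))"
      using assms(2) by (intro mult_left_mono) auto
    with pd_rejected_marg_le[OF assms(1,3) False] show ?thesis
      by (simp add: pd_dual_z_def False)
  qed
  then have "pd_dual_z f E \<beta> vs i \<le> (\<Sum>j\<in>?J. (1 + \<beta>) * ?w (vs ! j))"
    by (simp add: sum_distrib_left)
  moreover have "(1 + \<beta>) * ?w (vs ! i) \<ge> 0" using assms(2) w_nonneg by simp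
  ultimately show ?thesis by linarith
qed

theorem lemma2:
  fixes E :: "'a \<Rightarrow> 'a \<Rightarrow> bool" and vs :: "'a list" and k :: nat
    and f :: "'a set \<Rightarrow> real" and \<beta> :: real
  assumes "k \<ge> 1"
    and "simple_graph_on (set vs) E"
    and "k_independence_ordering E k vs"
    and "\<forall>A. A \<subseteq> set vs \<longrightarrow> f A \<ge> 0"
    and "monotone_set_fun (set vs) f"
    and "submodular (set vs) f"
    and "f {} = 0"
    and "\<beta> > 0"
  shows
    "let n = length vs; Send = S_end f E \<beta> vs; w = pd_weights f E \<beta> vs;
         \<mu> = f Send;
         y = (\<lambda>i. (1 + \<beta>) * w (vs ! i));
         z = (\<lambda>i. if vs ! i \<in> Send then 0 else marg f (stack_before f E \<beta> vs i) (vs ! i))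
     in (\<forall>L \<subseteq> {..<n}. \<mu> + (\<Sum>i\<in>L. z i) \<ge> f ((\<lambda>i. vs ! i) ` L))
      \<and> (\<forall>i < n. y i + (\<Sum>j \<in> {j. j < i \<and> E (vs ! i) (vs ! j)}. y j) \<ge> z i)
      \<and> (\<forall>i < n. y i \<ge> 0)"
proof -
  \<comment> \<open>Feasibility uses only distinctness of the ordering; k-independence matters for the
    approximation ratio, not here.\<close>
  have "distinct vs" using assms(3) by (simp add: k_independence_ordering_def)
  have "\<beta> \<ge> 0" using assms(8) by simp
  note cover = pd_cover_constraint[OF assms(5,6), of _ E \<beta>]
    and edge = pd_edge_constraint[OF \<open>distinct vs\<close> \<open>\<beta> \<ge> 0\<close>, of _ f E]
    and w_nonneg = pd_weights_nonneg[OF \<open>\<beta> \<ge> 0\<close>, of f E vs]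
  show ?thesis
    unfolding Let_def pd_dual_z_def[symmetric]
    using cover edge w_nonneg \<open>\<beta> \<ge> 0\<close> by simp
qed

end
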